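(* Let $(\mathfrak g,[\cdot,\cdot]_{\mathfrak g},E)$ be an ENL algebra and $K:W\to\mathfrak g$ an ENE-relative Rota–Baxter operator with respect to an ENE-representation $(W;T,\rho)$, and let $(W,[\cdot,\cdot]_K,T)$ be the ENL algebra with $[u,v]_K=\rho(Ku)v-\rho(Kv)u$. Define $\mu:W\to\mathfrak{gl}(\mathfrak g)$ by $\mu(u)x=K(\rho(x)u)-[x,Ku]_{\mathfrak g}$. Then $((\mathfrak g,E),(W,T);\rho,\mu)$ is a matched pair of ENL algebras.
   Context: Vector spaces are finite-dimensional over an algebraically closed field of characteristic zero. An ENL algebra is a Lie algebra with linear $E$ satisfying $E[x,y]=[x,Ey]$ for all $x,y$. An ENE-representation $(W;T,\rho)$ of $(\mathfrak g,E)$ is a representation $\rho:\mathfrak g\to\mathfrak{gl}(W)$ with linear $T$ such that $T(\rho(x)u)=\rho(Ex)u=\rho(x)(Tu)$. An ENE-relative Rota–Baxter operator is a linear $K:W\to\mathfrak g$ with $[Ku,Kv]_{\mathfrak g}=K(\rho(Ku)v-\rho(Kv)u)$ and $E\circ K=K\circ T$. A matched pair of Lie algebras $(\mathfrak g,\mathfrak h;\rho,\mu)$: Lie algebras $\mathfrak g,\mathfrak h$ with representations $\rho:\mathfrak g\to\mathfrak{gl}(\mathfrak h)$, $\mu:\mathfrak h\to\mathfrak{gl}(\mathfrak g)$ such that $\rho(x)[\xi,\eta]_{\mathfrak h}=[\rho(x)\xi,\eta]_{\mathfrak h}+[\xi,\rho(x)\eta]_{\mathfrak h}+\rho(\mu(\eta)x)\xi-\rho(\mu(\xi)x)\eta$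 and $\mu(\xi)[x,y]_{\mathfrak g}=[\mu(\xi)x,y]_{\mathfrak g}+[x,\mu(\xi)y]_{\mathfrak g}+\mu(\rho(y)\xi)x-\mu(\rho(x)\xi)y$. For ENL algebras $(\mathfrak g,E),(\mathfrak h,F)$, a matched pair of ENL algebras is such a matched pair with $F(\rho(x)\xi)=\rho(Ex)\xi=\rho(x)(F\xi)$ and $E(\mu(\xi)x)=\mu(F\xi)x=\mu(\xi)(Ex)$ for all $x\in\mathfrak g,\xi\in\mathfrak h$. *)

theory Defs
  imports "HOL-Computational_Algebra.Polynomial"
begin

text \<open>Ground field: algebraically closed (char 0 is imposed via the class field_char_0).\<close>
definition alg_closed :: "'k::field itself \<Rightarrow> bool" where
  "alg_closed TYPE('k) \<longleftrightarrow> (\<forall>p::'k poly. 0 < degree p \<longrightarrow> (\<exists>x. poly p x = 0))"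

definition fd_space :: "('k::field \<Rightarrow> 'v::ab_group_add \<Rightarrow> 'v) \<Rightarrow> bool" where
  "fd_space s \<longleftrightarrow> vector_space s \<and> (\<exists>B. finite_dimensional_vector_space s B)"

definition lie_algebra :: "('k::field \<Rightarrow> 'g::ab_group_add \<Rightarrow> 'g) \<Rightarrow> ('g \<Rightarrow> 'g \<Rightarrow> 'g) \<Rightarrow> bool" where
  "lie_algebra s br \<longleftrightarrow> vector_space s
     \<and> (\<forall>x. Vector_Spaces.linear s s (br x)) \<and> (\<forall>y. Vector_Spaces.linear s s (\<lambda>x. br x y))
     \<and> (\<forall>x. br x x = 0)
     \<and> (\<forall>x y z. br x (br y z) + br y (br z x) + br z (br x y) = 0)"

definition lie_rep :: "('k::field \<Rightarrow> 'g::ab_group_add \<Rightarrow> 'g) \<Rightarrow> ('g \<Rightarrow> 'g \<Rightarrow> 'g) \<Rightarrow>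
    ('k \<Rightarrow> 'w::ab_group_add \<Rightarrow> 'w) \<Rightarrow> ('g \<Rightarrow> 'w \<Rightarrow> 'w) \<Rightarrow> bool" where
  "lie_rep sg br sw rho \<longleftrightarrow> vector_space sw
     \<and> (\<forall>x y w. rho (x + y) w = rho x w + rho y w)
     \<and> (\<forall>c x w. rho (sg c x) w = sw c (rho x w))
     \<and> (\<forall>x. Vector_Spaces.linear sw sw (rho x))
     \<and> (\<forall>x y w. rho (br x y) w = rho x (rho y w) - rho y (rho x w))"

definition ENL_algebra :: "('k::field \<Rightarrow> 'g::ab_group_add \<Rightarrow> 'g) \<Rightarrow> ('g \<Rightarrow> 'g \<Rightarrow> 'g) \<Rightarrow> ('g \<Rightarrow> 'g) \<Rightarrow> bool" where
  "ENL_algebra s br E \<longleftrightarrow> lie_algebra s br \<and> Vector_Spaces.linear s s E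
     \<and> (\<forall>x y. E (br x y) = br x (E y))"

definition ENE_rep :: "('k::field \<Rightarrow> 'g::ab_group_add \<Rightarrow> 'g) \<Rightarrow> ('g \<Rightarrow> 'g \<Rightarrow> 'g) \<Rightarrow> ('g \<Rightarrow> 'g) \<Rightarrow>
    ('k \<Rightarrow> 'w::ab_group_add \<Rightarrow> 'w) \<Rightarrow> ('w \<Rightarrow> 'w) \<Rightarrow> ('g \<Rightarrow> 'w \<Rightarrow> 'w) \<Rightarrow> bool" where
  "ENE_rep sg br E sw T rho \<longleftrightarrow> lie_rep sg br sw rho \<and> Vector_Spaces.linear sw sw T
     \<and> (\<forall>x u. T (rho x u) = rho (E x) u \<and> rho (E x) u = rho x (T u))"

definition ENE_RB :: "('k::field \<Rightarrow> 'g::ab_group_add \<Rightarrow> 'g) \<Rightarrow> ('g \<Rightarrow> 'g \<Rightarrow> 'g) \<Rightarrow> ('g \<Rightarrow> 'g) \<Rightarrow>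
    ('k \<Rightarrow> 'w::ab_group_add \<Rightarrow> 'w) \<Rightarrow> ('w \<Rightarrow> 'w) \<Rightarrow> ('g \<Rightarrow> 'w \<Rightarrow> 'w) \<Rightarrow> ('w \<Rightarrow> 'g) \<Rightarrow> bool" where
  "ENE_RB sg br E sw T rho K \<longleftrightarrow> Vector_Spaces.linear sw sg K
     \<and> (\<forall>u v. br (K u) (K v) = K (rho (K u) v - rho (K v) u))
     \<and> (\<forall>u. E (K u) = K (T u))"

definition matched_pair :: "('k::field \<Rightarrow> 'g::ab_group_add \<Rightarrow> 'g) \<Rightarrow> ('g \<Rightarrow> 'g \<Rightarrow> 'g) \<Rightarrow>
    ('k \<Rightarrow> 'h::ab_group_add \<Rightarrow> 'h) \<Rightarrow> ('h \<Rightarrow> 'h \<Rightarrow> 'h) \<Rightarrow>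
    ('g \<Rightarrow> 'h \<Rightarrow> 'h) \<Rightarrow> ('h \<Rightarrow> 'g \<Rightarrow> 'g) \<Rightarrow> bool" where
  "matched_pair sg brg sh brh rho mu \<longleftrightarrow>
     lie_algebra sg brg \<and> lie_algebra sh brh
     \<and> lie_rep sg brg sh rho \<and> lie_rep sh brh sg mu
     \<and> (\<forall>x \<xi> \<eta>. rho x (brh \<xi> \<eta>) = brh (rho x \<xi>) \<eta> + brh \<xi> (rho x \<eta>)
                    + rho (mu \<eta> x) \<xi> - rho (mu \<xi> x) \<eta>)
     \<and> (\<forall>\<xi> x y. mu \<xi> (brg x y) = brg (mu \<xi> x) y + brg x (mu \<xi> y)
                    + mu (rho y \<xi>) x - mu (rho x \<xi>) y)"

definition ENL_matched_pair :: "('k::field \<Rightarrow> 'g::ab_group_add \<Rightarrow> 'g) \<Rightarrow> ('g \<Rightarrow> 'g \<Rightarrow> 'g) \<Rightarrow> ('g \<Rightarrow> 'g) \<Rightarrow>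
    ('k \<Rightarrow> 'h::ab_group_add \<Rightarrow> 'h) \<Rightarrow> ('h \<Rightarrow> 'h \<Rightarrow> 'h) \<Rightarrow> ('h \<Rightarrow> 'h) \<Rightarrow>
    ('g \<Rightarrow> 'h \<Rightarrow> 'h) \<Rightarrow> ('h \<Rightarrow> 'g \<Rightarrow> 'g) \<Rightarrow> bool" where
  "ENL_matched_pair sg brg E sh brh F rho mu \<longleftrightarrow>
     ENL_algebra sg brg E \<and> ENL_algebra sh brh F
     \<and> matched_pair sg brg sh brh rho mu
     \<and> (\<forall>x \<xi>. F (rho x \<xi>) = rho (E x) \<xi> \<and> rho (E x) \<xi> = rho x (F \<xi>))
     \<and> (\<forall>x \<xi>. E (mu \<xi> x) = mu (F \<xi>) x \<and> mu (F \<xi>) x = mu \<xi> (E x))"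

end

theory Submission
  imports Defs
begin

text \<open>The Rota-Baxter identity says that \<open>K\<close> maps \<open>[u,v]\<^sub>K\<close> to \<open>[Ku,Kv]\<close>.
  Using it to move brackets of images of \<open>K\<close> inside \<open>K\<close>, together with the representation
  property of \<open>\<rho>\<close>, turns every nested expression into a sum of terms \<open>\<rho>(Ka)\<rho>(b)c\<close>
  (possibly under \<open>K\<close>) and iterated brackets in \<open>\<gg>\<close>. The Jacobi identity of
  \<open>[\<cdot>,\<cdot>]\<^sub>K\<close>, the representation property of \<open>\<mu>\<close> and both matched-pair
  compatibilities then reduce to cancellations, after one use of the Jacobi identity of \<open>\<gg>\<close>
  for the last two. The ENL conditions follow from \<open>EK = KT\<close>, \<open>T\<rho>(x) = \<rho>(Ex) = \<rho>(x)T\<close>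
  and \<open>E[x,y] = [Ex,y] = [x,Ey]\<close>.\<close>

lemma linear_eqs:
  assumes "Vector_Spaces.linear s1 s2 f"
  shows "f (x + y) = f x + f y" and "f (x - y) = f x - f y" and "f (- x) = - f x"
    and "f (s1 c x) = s2 c (f x)"
  using Vector_Spaces.linear.axioms(3)[OF assms]
  by (simp_all add: module_hom.add module_hom.diff module_hom.neg module_hom.scale)

lemma lie_algebra_linear_left: "lie_algebra s br \<Longrightarrow> Vector_Spaces.linear s s (\<lambda>x. br x y)"
  by (simp add: lie_algebra_def)

lemma lie_algebra_linear_right: "lie_algebra s br \<Longrightarrow> Vector_Spaces.linear s s (br x)"
  by (simp add: lie_algebra_def)

lemma lie_algebra_antisym:
  assumes "lie_algebra s br"
  shows "br y x = - br x y"
proof -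
  have "0 = br (x + y) (x + y)"
    using assms by (simp add: lie_algebra_def)
  also have "\<dots> = br x y + br y x"
    using assms by (simp add: linear_eqs(1)[OF lie_algebra_linear_left]
        linear_eqs(1)[OF lie_algebra_linear_right]) (simp add: lie_algebra_def)
  finally show ?thesis
    by (simp add: eq_neg_iff_add_eq_0 add.commute)
qed

lemma lie_algebra_leibniz:
  assumes "lie_algebra s br"
  shows "br x (br y z) = br (br x y) z + br y (br x z)"
proof -
  have "br x (br y z) + br y (br z x) + br z (br x y) = 0"
    using assms by (simp add: lie_algebra_def)
  moreover have "br y (br z x) = - br y (br x z)"
    using assms by (metis lie_algebra_antisym lie_algebra_linear_right linear_eqs(3))
  moreover have "br z (br x y) = - br (br x y) z"
    using assms by (rule lie_algebra_antisym)
  ultimately show ?thesis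
    by (simp add: algebra_simps eq_neg_iff_add_eq_0)
qed

lemma lie_rep_linear_left:
  "lie_algebra sg br \<Longrightarrow> lie_rep sg br sw rho \<Longrightarrow> Vector_Spaces.linear sg sw (\<lambda>x. rho x w)"
  by (simp add: Vector_Spaces.linear_iff lie_algebra_def lie_rep_def)

lemma lie_rep_linear_right: "lie_rep sg br sw rho \<Longrightarrow> Vector_Spaces.linear sw sw (rho x)"
  by (simp add: lie_rep_def)

lemma ENL_algebra_bracket_left:
  assumes "ENL_algebra s br E"
  shows "E (br x y) = br (E x) y"
proof -
  have lie: "lie_algebra s br" and E_linear: "Vector_Spaces.linear s s E"
    using assms by (simp_all add: ENL_algebra_def)
  have "E (br x y) = - E (br y x)"
    using lie E_linear by (simp add: lie_algebra_antisym[of s br x y] linear_eqs(3))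
  also have "\<dots> = br (E x) y"
    using assms lie by (simp add: ENL_algebra_def lie_algebra_antisym[of s br y "E x"])
  finally show ?thesis .
qed

definition descendent_bracket :: "('w \<Rightarrow> 'g) \<Rightarrow> ('g \<Rightarrow> 'w \<Rightarrow> 'w) \<Rightarrow> 'w \<Rightarrow> 'w \<Rightarrow> 'w::ab_group_add"
  where "descendent_bracket K rho u v = rho (K u) v - rho (K v) u"

definition induced_action ::
    "('g \<Rightarrow> 'g \<Rightarrow> 'g::ab_group_add) \<Rightarrow> ('w \<Rightarrow> 'g) \<Rightarrow> ('g \<Rightarrow> 'w \<Rightarrow> 'w) \<Rightarrow> 'w \<Rightarrow> 'g \<Rightarrow> 'g"
  where "induced_action br K rho u x = K (rho x u) - br x (K u)"

locale relative_RB =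
  fixes sg :: "'k::field \<Rightarrow> 'g::ab_group_add \<Rightarrow> 'g" and br :: "'g \<Rightarrow> 'g \<Rightarrow> 'g"
    and sw :: "'k \<Rightarrow> 'w::ab_group_add \<Rightarrow> 'w" and rho :: "'g \<Rightarrow> 'w \<Rightarrow> 'w"
    and K :: "'w \<Rightarrow> 'g"
  assumes lie: "lie_algebra sg br"
    and rep: "lie_rep sg br sw rho"
    and K_linear: "Vector_Spaces.linear sw sg K"
    and RB: "br (K u) (K v) = K (rho (K u) v - rho (K v) u)"
begin

sublocale G: vector_space sg
  using lie by (simp add: lie_algebra_def)

sublocale W: vector_space sw
  using rep by (simp add: lie_rep_def)

lemmas bracket_left = linear_eqs[OF lie_algebra_linear_left[OF lie]]
lemmas bracket_right = linear_eqs[OF lie_algebra_linear_right[OF lie]]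
lemmas rho_left = linear_eqs[OF lie_rep_linear_left[OF lie rep]]
lemmas rho_right = linear_eqs[OF lie_rep_linear_right[OF rep]]
lemmas K_eqs = linear_eqs[OF K_linear]

lemma rho_bracket: "rho (br x y) w = rho x (rho y w) - rho y (rho x w)"
  using rep by (simp add: lie_rep_def)

abbreviation brK :: "'w \<Rightarrow> 'w \<Rightarrow> 'w" where "brK \<equiv> descendent_bracket K rho"
abbreviation mu :: "'w \<Rightarrow> 'g \<Rightarrow> 'g" where "mu \<equiv> induced_action br K rho"

lemma K_brK: "K (brK u v) = br (K u) (K v)"
  by (simp add: descendent_bracket_def RB)

lemma brK_nested:
  "brK u (brK v w) = rho (K u) (rho (K v) w) - rho (K u) (rho (K w) v)
     - rho (K v) (rho (K w) u) + rho (K w) (rho (K v) u)"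
  by (simp add: K_brK[unfolded descendent_bracket_def] descendent_bracket_def rho_bracket
      rho_right(2) algebra_simps)

lemma brK_jacobi: "brK u (brK v w) + brK v (brK w u) + brK w (brK u v) = 0"
  unfolding brK_nested by simp

lemma lie_algebra_descendent: "lie_algebra sw brK"
  unfolding lie_algebra_def Vector_Spaces.linear_iff
  by (simp add: W.vector_space_axioms brK_jacobi)
    (simp add: descendent_bracket_def K_eqs rho_left rho_right algebra_simps
      W.scale_right_diff_distrib)

lemma mu_mu:
  "mu u (mu v x) = K (rho (K u) (rho x v)) - K (rho x (rho (K v) u)) + K (rho (K v) (rho x u))
     + br (br x (K v)) (K u)"
proof -
  have "mu u (mu v x) = K (rho (K (rho x v)) u) - K (rho (br x (K v)) u)
      - br (K (rho x v)) (K u) + br (br x (K v)) (K u)"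
    by (simp add: induced_action_def rho_left K_eqs bracket_left algebra_simps)
  also have "\<dots> = K (rho (K u) (rho x v)) - K (rho x (rho (K v) u)) + K (rho (K v) (rho x u))
     + br (br x (K v)) (K u)"
    by (simp add: RB rho_bracket K_eqs algebra_simps)
  finally show ?thesis .
qed

lemma mu_brK: "mu (brK u v) x = mu u (mu v x) - mu v (mu u x)"
proof -
  have "mu (brK u v) x = K (rho x (brK u v)) - br x (br (K u) (K v))"
    by (simp add: induced_action_def K_brK)
  moreover have "br x (br (K u) (K v)) = br (br x (K u)) (K v) - br (br x (K v)) (K u)"
    using lie_algebra_leibniz[OF lie, of x "K u" "K v"]
      lie_algebra_antisym[OF lie, of "br x (K v)" "K u"] by simp
  ultimately show ?thesis
    unfolding mu_mu by (simp add: descendent_bracket_def K_eqs rho_right algebra_simps)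
qed

lemma lie_rep_induced_action: "lie_rep sw brK sg mu"
  unfolding lie_rep_def Vector_Spaces.linear_iff
  by (simp add: G.vector_space_axioms mu_brK)
    (simp add: induced_action_def K_eqs rho_left rho_right bracket_left bracket_right
      algebra_simps G.scale_right_diff_distrib)

lemma rho_brK:
  "rho x (brK u v) = brK (rho x u) v + brK u (rho x v) + rho (mu v x) u - rho (mu u x) v"
  by (simp add: descendent_bracket_def induced_action_def rho_left rho_right rho_bracket
      algebra_simps)

lemma mu_bracket:
  "mu u (br x y) = br (mu u x) y + br x (mu u y) + mu (rho y u) x - mu (rho x u) y"
proof -
  have "br x (br y (K u)) = br (br x y) (K u) - br (br x (K u)) y"
    using lie_algebra_leibniz[OF lie, of x y "K u"]
      lie_algebra_antisym[OF lie, of y "br x (K u)"] by simp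
  moreover have "br (K (rho x u)) y = - br y (K (rho x u))"
    by (rule lie_algebra_antisym[OF lie])
  ultimately show ?thesis
    by (simp add: induced_action_def rho_bracket K_eqs bracket_left bracket_right algebra_simps)
qed

lemma matched_pair_descendent: "matched_pair sg br sw brK rho mu"
  unfolding matched_pair_def
  using lie rep lie_algebra_descendent lie_rep_induced_action rho_brK mu_bracket by blast

end

locale ENE_relative_RB = relative_RB +
  fixes E and T
  assumes ENL: "ENL_algebra sg br E"
    and ENE: "ENE_rep sg br E sw T rho"
    and E_K: "E (K u) = K (T u)"
begin

lemma T_rho: "T (rho x u) = rho (E x) u" and rho_E: "rho (E x) u = rho x (T u)"
  using ENE by (simp_all add: ENE_rep_def)

lemma ENL_algebra_descendent: "ENL_algebra sw brK T"
proof -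
  have "Vector_Spaces.linear sw sw T"
    using ENE by (simp add: ENE_rep_def)
  then show ?thesis
    using lie_algebra_descendent
    by (simp add: ENL_algebra_def descendent_bracket_def linear_eqs(2) T_rho rho_E E_K[symmetric])
qed

lemma E_mu: "E (mu u x) = mu (T u) x" and mu_T: "mu (T u) x = mu u (E x)"
proof -
  have E_linear: "Vector_Spaces.linear sg sg E"
    and E_bracket_right: "\<And>x y. E (br x y) = br x (E y)"
    using ENL by (simp_all add: ENL_algebra_def)
  show "E (mu u x) = mu (T u) x" and "mu (T u) x = mu u (E x)"
    by (simp_all add: induced_action_def linear_eqs(2)[OF E_linear] E_bracket_right E_K T_rho rho_E
        ENL_algebra_bracket_left[OF ENL, symmetric])
qed

theorem ENL_matched_pair_descendent: "ENL_matched_pair sg br E sw brK T rho mu"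
  unfolding ENL_matched_pair_def
  using ENL ENL_algebra_descendent matched_pair_descendent T_rho rho_E E_mu mu_T by blast

end

theorem proposition6p5:
  fixes sg :: "'k::field_char_0 \<Rightarrow> 'g::ab_group_add \<Rightarrow> 'g"
    and br :: "'g \<Rightarrow> 'g \<Rightarrow> 'g" and E :: "'g \<Rightarrow> 'g"
    and sw :: "'k \<Rightarrow> 'w::ab_group_add \<Rightarrow> 'w" and T :: "'w \<Rightarrow> 'w"
    and rho :: "'g \<Rightarrow> 'w \<Rightarrow> 'w" and K :: "'w \<Rightarrow> 'g"
  assumes "alg_closed TYPE('k)"
    and "fd_space sg" and "fd_space sw"
    and "ENL_algebra sg br E"
    and "ENE_rep sg br E sw T rho"
    and "ENE_RB sg br E sw T rho K"
  shows "ENL_matched_pair sg br E sw (\<lambda>u v. rho (K u) v - rho (K v) u) T rho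
           (\<lambda>u x. K (rho x u) - br x (K u))"
proof -
  interpret ENE_relative_RB sg br sw rho K E T
    using assms(4-6)
    by (intro ENE_relative_RB.intro relative_RB.intro ENE_relative_RB_axioms.intro)
      (auto simp: ENL_algebra_def ENE_rep_def ENE_RB_def)
  show ?thesis
    using ENL_matched_pair_descendent
    unfolding descendent_bracket_def[abs_def] induced_action_def[abs_def] .
qed

end
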